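(* Let $\varepsilon\in\{0,\tfrac12\}$ and let $\mathcal{SV}(\varepsilon)$ be the Schrödinger–Virasoro Lie algebra. A bilinear map $f:\mathcal{SV}(\varepsilon)\times\mathcal{SV}(\varepsilon)\to\mathcal{SV}(\varepsilon)$ is a biderivation of $\mathcal{SV}(\varepsilon)$ if and only if there exist $\lambda\in\mathbb{C}$ and a family $\Omega=\{\mu_i\in\mathbb{C}\mid i\in\mathbb{Z}\}$ with only finitely many nonzero $\mu_i$ such that $$f(x,y)=\lambda[x,y]+\chi_\Omega(x,y)\quad\text{for all }x,y\in\mathcal{SV}(\varepsilon).$$
   Context: For $\varepsilon\in\{0,\frac12\}$, $\mathcal{SV}(\varepsilon)$ is the complex Lie algebra with basis $\{L_i,Y_j,M_i\mid i\in\mathbb{Z},\ j\in\varepsilon+\mathbb{Z}\}$ and brackets $[L_m,L_n]=(m-n)L_{m+n}$, $[L_m,Y_n]=(\frac12 m-n)Y_{m+n}$, $[L_m,M_n]=-nM_{m+n}$, $[Y_m,Y_n]=(m-n)M_{m+n}$, $[Y_m,M_n]=[M_m,M_n]=0$. Write $\mathfrak{Y}=\bigoplus_{j\in\varepsilon+\mathbb{Z}}\mathbb{C}Y_j$ and $\mathfrak{M}=\bigoplus_{i\in\mathbb{Z}}\mathbb{C}M_i$. A biderivation of a Lie algebra $L$ is a bilinear map $f:L\times L\to L$ with $f([x,y],z)=[x,f(y,z)]+[f(x,z),y]$ and $f(x,[y,z])=[f(x,y),z]+[y,f(x,z)]$ for all $x,y,z\in L$. For a family $\Omega=\{\mu_i\}_{i\in\mathbb{Z}}$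 with finitely many nonzero entries, $\chi_\Omega$ is the bilinear map on $\mathcal{SV}(\varepsilon)$ defined by $\chi_\Omega(L_m,L_n)=\sum_{i\in\mathbb{Z}}\mu_iM_{m+n+i}$ for all $m,n\in\mathbb{Z}$, and $\chi_\Omega(x,y)=0$ whenever $x$ or $y$ is a basis element lying in $\mathfrak{Y}\cup\mathfrak{M}$. *)

theory Defs
  imports Complex_Main
begin

(* Basis of SV(eps): L m (m in Z), Y k standing for Y_{k+eps} (k in Z), M m (m in Z). *)
datatype svb = L int | Y int | M int

type_synonym sv = "svb \<Rightarrow> complex"

definition supp :: "sv \<Rightarrow> svb set" where
  "supp x = {b. x b \<noteq> 0}"

definition SV :: "sv set" where
  "SV = {x. finite (supp x)}"

definition vadd :: "sv \<Rightarrow> sv \<Rightarrow> sv" where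
  "vadd x y = (\<lambda>b. x b + y b)"

definition smul :: "complex \<Rightarrow> sv \<Rightarrow> sv" where
  "smul c x = (\<lambda>b. c * x b)"

definition sc :: "complex \<Rightarrow> svb \<Rightarrow> sv" where
  "sc c b = (\<lambda>b'. if b' = b then c else 0)"

(* 2*eps as an integer, for eps in {0, 1/2} *)
definition tw :: "complex \<Rightarrow> int" where
  "tw e = (if e = 0 then 0 else 1)"

fun brb :: "complex \<Rightarrow> svb \<Rightarrow> svb \<Rightarrow> sv" where
  "brb e (L m) (L n) = sc (of_int (m - n)) (L (m + n))"
| "brb e (L m) (Y n) = sc (of_int m / 2 - (of_int n + e)) (Y (m + n))"
| "brb e (L m) (M n) = sc (- of_int n) (M (m + n))"
| "brb e (Y n) (L m) = sc (- (of_int m / 2 - (of_int n + e))) (Y (m + n))"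
| "brb e (Y m) (Y n) = sc (of_int (m - n)) (M (m + n + tw e))"
| "brb e (Y m) (M n) = (\<lambda>_. 0)"
| "brb e (M n) (L m) = sc (of_int n) (M (m + n))"
| "brb e (M m) (Y n) = (\<lambda>_. 0)"
| "brb e (M m) (M n) = (\<lambda>_. 0)"

definition br :: "complex \<Rightarrow> sv \<Rightarrow> sv \<Rightarrow> sv" where
  "br e x y = (\<lambda>b. \<Sum>p\<in>supp x. \<Sum>q\<in>supp y. x p * y q * brb e p q b)"

fun chib :: "(int \<Rightarrow> complex) \<Rightarrow> svb \<Rightarrow> svb \<Rightarrow> sv" where
  "chib \<mu> (L m) (L n) = (\<lambda>b. case b of M k \<Rightarrow> \<mu> (k - m - n) | _ \<Rightarrow> 0)"
| "chib \<mu> _ _ = (\<lambda>_. 0)"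

definition chi :: "(int \<Rightarrow> complex) \<Rightarrow> sv \<Rightarrow> sv \<Rightarrow> sv" where
  "chi \<mu> x y = (\<lambda>b. \<Sum>p\<in>supp x. \<Sum>q\<in>supp y. x p * y q * chib \<mu> p q b)"

definition bilinear_sv :: "(sv \<Rightarrow> sv \<Rightarrow> sv) \<Rightarrow> bool" where
  "bilinear_sv f \<longleftrightarrow>
     (\<forall>x\<in>SV. \<forall>y\<in>SV. f x y \<in> SV) \<and>
     (\<forall>x\<in>SV. \<forall>y\<in>SV. \<forall>z\<in>SV. f (vadd x y) z = vadd (f x z) (f y z)) \<and>
     (\<forall>x\<in>SV. \<forall>y\<in>SV. \<forall>z\<in>SV. f x (vadd y z) = vadd (f x y) (f x z)) \<and>
     (\<forall>c. \<forall>x\<in>SV. \<forall>y\<in>SV. f (smul c x) y = smul c (f x y)) \<and>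
     (\<forall>c. \<forall>x\<in>SV. \<forall>y\<in>SV. f x (smul c y) = smul c (f x y))"

definition biderivation :: "complex \<Rightarrow> (sv \<Rightarrow> sv \<Rightarrow> sv) \<Rightarrow> bool" where
  "biderivation e f \<longleftrightarrow>
     (\<forall>x\<in>SV. \<forall>y\<in>SV. \<forall>z\<in>SV.
        f (br e x y) z = vadd (br e x (f y z)) (br e (f x z) y) \<and>
        f x (br e y z) = vadd (br e (f x y) z) (br e y (f x z)))"

end

theory Submission
  imports Defs
begin

text \<open>Both biderivation identities are trilinear, so they may be imposed on basis vectors only,
where each ad a acts as a weighted shift of the basis. Subtracting \<open>\<lambda>[x,y] + \<chi>\<^sub>\<Omega>(x,y)\<close>,
with \<open>\<lambda>\<close> read off from f(L_0,L_1) and \<open>\<Omega>\<close> from the M-components of f(L_0,L_0), leaves a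
biderivation g with g(L_0,L_0) = 0 and no L_1-component in g(L_0,L_1). Since ad L_0 is diagonal,
the identities with L_0 in one slot make g weight-homogeneous and reduce g(L_0,L_n) and g(L_n,L_0)
to scalar relations in n, whose only solution is zero; this propagates to g(L_0,\<cdot>) and g(\<cdot>,L_0),
and then to all of g because every basis vector is a bracket of basis vectors of other weights.\<close>

section \<open>The adjoint action on the basis\<close>

(* The bracket of a with a basis vector has a t-component only for the argument ad_src e a t,
   with coefficient ad_coeff e a t; where no such argument exists, ad_coeff is 0 and ad_src junk. *)
fun ad_src :: "complex \<Rightarrow> svb \<Rightarrow> svb \<Rightarrow> svb" where
  "ad_src e (L m) (L j) = L (j - m)"
| "ad_src e (L m) (Y j) = Y (j - m)"
| "ad_src e (L m) (M j) = M (j - m)"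
| "ad_src e (Y m) (L j) = L 0"
| "ad_src e (Y m) (Y j) = L (j - m)"
| "ad_src e (Y m) (M j) = Y (j - m - tw e)"
| "ad_src e (M m) (L j) = L 0"
| "ad_src e (M m) (Y j) = L 0"
| "ad_src e (M m) (M j) = L (j - m)"

fun ad_coeff :: "complex \<Rightarrow> svb \<Rightarrow> svb \<Rightarrow> complex" where
  "ad_coeff e (L m) (L j) = of_int (2 * m - j)"
| "ad_coeff e (L m) (Y j) = of_int m / 2 - (of_int (j - m) + e)"
| "ad_coeff e (L m) (M j) = - of_int (j - m)"
| "ad_coeff e (Y m) (L j) = 0"
| "ad_coeff e (Y m) (Y j) = - (of_int (j - m) / 2 - (of_int m + e))"
| "ad_coeff e (Y m) (M j) = of_int (m - (j - m - tw e))"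
| "ad_coeff e (M m) (L j) = 0"
| "ad_coeff e (M m) (Y j) = 0"
| "ad_coeff e (M m) (M j) = of_int m"

definition ad :: "complex \<Rightarrow> svb \<Rightarrow> sv \<Rightarrow> sv" where
  "ad e a w = (\<lambda>t. ad_coeff e a t * w (ad_src e a t))"

lemma brb_eq_ad_monomial: "brb e a q t = (if q = ad_src e a t then ad_coeff e a t else 0)"
  by (cases a; cases q; cases t) (auto simp: sc_def algebra_simps)

lemma ad_zero [simp]: "ad e a (\<lambda>_. 0) = (\<lambda>_. 0)"
  by (simp add: ad_def)

fun bracket_coeff :: "complex \<Rightarrow> svb \<Rightarrow> svb \<Rightarrow> complex" where
  "bracket_coeff e (L m) (L n) = of_int (m - n)"
| "bracket_coeff e (L m) (Y n) = of_int m / 2 - (of_int n + e)"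
| "bracket_coeff e (L m) (M n) = - of_int n"
| "bracket_coeff e (Y n) (L m) = - (of_int m / 2 - (of_int n + e))"
| "bracket_coeff e (Y m) (Y n) = of_int (m - n)"
| "bracket_coeff e (Y m) (M n) = 0"
| "bracket_coeff e (M n) (L m) = of_int n"
| "bracket_coeff e (M m) (Y n) = 0"
| "bracket_coeff e (M m) (M n) = 0"

fun bracket_basis :: "complex \<Rightarrow> svb \<Rightarrow> svb \<Rightarrow> svb" where
  "bracket_basis e (L m) (L n) = L (m + n)"
| "bracket_basis e (L m) (Y n) = Y (m + n)"
| "bracket_basis e (L m) (M n) = M (m + n)"
| "bracket_basis e (Y n) (L m) = Y (m + n)"
| "bracket_basis e (Y m) (Y n) = M (m + n + tw e)"
| "bracket_basis e (Y m) (M n) = L 0"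
| "bracket_basis e (M n) (L m) = M (m + n)"
| "bracket_basis e (M m) (Y n) = L 0"
| "bracket_basis e (M m) (M n) = L 0"

lemma brb_eq_sc: "brb e a b = sc (bracket_coeff e a b) (bracket_basis e a b)"
  by (cases a; cases b) (auto simp: sc_def fun_eq_iff)

(* The grading by ad L_0, which multiplies the basis vector b by - weight e b / 2. *)
fun weight :: "complex \<Rightarrow> svb \<Rightarrow> int" where
  "weight e (L m) = 2 * m"
| "weight e (Y k) = 2 * k + tw e"
| "weight e (M m) = 2 * m"

lemma tw_cases: "tw e = 0 \<or> tw e = 1"
  by (simp add: tw_def)

lemma bracket_coeff_L0: "of_int (tw e) = 2 * e \<Longrightarrow> bracket_coeff e (L 0) b = - of_int (weight e b) / 2"
  by (cases b) (auto simp: field_simps)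

lemma bracket_basis_L0 [simp]: "bracket_basis e (L 0) b = b"
  by (cases b) auto

lemma ad_coeff_L0: "of_int (tw e) = 2 * e \<Longrightarrow> ad_coeff e (L 0) t = - of_int (weight e t) / 2"
  by (cases t) (auto simp: field_simps)

lemma ad_src_L0 [simp]: "ad_src e (L 0) t = t"
  by (cases t) auto

(* H p q stands for f (p, q) on basis vectors; the signs come from [w, b] = - ad b w. *)

definition bider_left :: "complex \<Rightarrow> (svb \<Rightarrow> svb \<Rightarrow> sv) \<Rightarrow> bool" where
  "bider_left e H \<longleftrightarrow> (\<forall>a b c t.
     bracket_coeff e a b * H (bracket_basis e a b) c t = ad e a (H b c) t - ad e b (H a c) t)"

definition bider_right :: "complex \<Rightarrow> (svb \<Rightarrow> svb \<Rightarrow> sv) \<Rightarrow> bool" where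
  "bider_right e H \<longleftrightarrow> (\<forall>a b c t.
     bracket_coeff e b c * H a (bracket_basis e b c) t = ad e b (H a c) t - ad e c (H a b) t)"

lemma bider_left_brb: "of_int (tw e) = 2 * e \<Longrightarrow> bider_left e (brb e)"
  unfolding bider_left_def ad_def
  by (intro allI, case_tac a; case_tac b; case_tac c; case_tac t) (auto simp: sc_def field_simps)

lemma bider_right_brb: "of_int (tw e) = 2 * e \<Longrightarrow> bider_right e (brb e)"
  unfolding bider_right_def ad_def
  by (intro allI, case_tac a; case_tac b; case_tac c; case_tac t) (auto simp: sc_def field_simps)

lemma bider_left_chib: "bider_left e (chib \<mu>)"
  unfolding bider_left_def ad_def
  by (intro allI, case_tac a; case_tac b; case_tac c; case_tac t) (auto simp: sc_def field_simps)

lemma bider_right_chib: "bider_right e (chib \<mu>)"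
  unfolding bider_right_def ad_def
  by (intro allI, case_tac a; case_tac b; case_tac c; case_tac t) (auto simp: sc_def field_simps)

lemma bider_left_lincomb:
  assumes "bider_left e H1" "bider_left e H2"
  shows "bider_left e (\<lambda>a b t. c1 * H1 a b t + c2 * H2 a b t)"
  unfolding bider_left_def
proof (intro allI)
  fix a b c t
  note eq = assms[unfolded bider_left_def, rule_format, where a = a and b = b and c = c and t = t]
  show "bracket_coeff e a b * (c1 * H1 (bracket_basis e a b) c t + c2 * H2 (bracket_basis e a b) c t) =
      ad e a (\<lambda>t. c1 * H1 b c t + c2 * H2 b c t) t - ad e b (\<lambda>t. c1 * H1 a c t + c2 * H2 a c t) t"
    using eq unfolding ad_def by algebra
qed

lemma bider_right_lincomb:
  assumes "bider_right e H1" "bider_right e H2"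
  shows "bider_right e (\<lambda>a b t. c1 * H1 a b t + c2 * H2 a b t)"
  unfolding bider_right_def
proof (intro allI)
  fix a b c t
  note eq = assms[unfolded bider_right_def, rule_format, where a = a and b = b and c = c and t = t]
  show "bracket_coeff e b c * (c1 * H1 a (bracket_basis e b c) t + c2 * H2 a (bracket_basis e b c) t) =
      ad e b (\<lambda>t. c1 * H1 a c t + c2 * H2 a c t) t - ad e c (\<lambda>t. c1 * H1 a b t + c2 * H2 a b t) t"
    using eq unfolding ad_def by algebra
qed

section \<open>Biderivation kernels\<close>

lemma scalar_relation_LL_vanishes:
  fixes \<alpha> \<beta> :: "int \<Rightarrow> complex"
  assumes rel: "\<And>m n. m \<noteq> 0 \<Longrightarrow> n \<noteq> 0 \<Longrightarrow>
      of_int m * of_int (n - m) * \<alpha> n = of_int n * of_int (m - n) * \<beta> m"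
    and \<alpha>1: "\<alpha> 1 = 0" and n: "n \<noteq> 0"
  shows "\<alpha> n = 0" and "\<beta> n = 0"
proof -
  have \<beta>: "\<beta> m = 0" if "m \<noteq> 0" "m \<noteq> 1" for m
    using rel[of m 1] that \<alpha>1 by simp
  have \<alpha>: "\<alpha> k = 0" if "k \<noteq> 0" for k
  proof -
    define m :: int where "m = (if k = 2 then 3 else 2)"
    have "m \<noteq> 0" "m \<noteq> 1" "k - m \<noteq> 0" by (auto simp: m_def)
    then show ?thesis using rel[of m k] \<beta>[of m] that by simp
  qed
  show "\<alpha> n = 0" using \<alpha> n .
  have "\<beta> 1 = 0" using rel[of 1 2] \<alpha>[of 2] by simp
  then show "\<beta> n = 0" using \<beta> n by (cases "n = 1") auto
qed

lemma scalar_relation_LY_vanishes: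
  fixes \<gamma> \<delta> :: "int \<Rightarrow> complex"
  assumes rel: "\<And>m n. m \<noteq> 0 \<Longrightarrow> n \<noteq> 0 \<Longrightarrow>
      of_int m * (of_int m / 2 - of_int n) * \<gamma> n = of_int n * (of_int n / 2 - of_int m) * \<delta> m"
    and n: "n \<noteq> 0"
  shows "\<gamma> n = 0" and "\<delta> n = 0"
proof -
  have diag: "\<gamma> k = \<delta> k" if "k \<noteq> 0" for k
    using rel[of k k] that by (simp add: field_simps)
  have "\<delta> 2 = 0" using rel[of 2 1] by simp
  then have \<gamma>: "\<gamma> k = 0" if "k \<noteq> 0" "k \<noteq> 1" for k
    using rel[of 2 k] that by (simp add: field_simps)
  have "\<delta> 3 = 0" using diag[of 3] \<gamma>[of 3] by simp
  then have "\<gamma> 1 = 0" using rel[of 3 1] by (simp add: field_simps)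
  then show "\<gamma> n = 0" using \<gamma> n by (cases "n = 1") auto
  then show "\<delta> n = 0" using diag n by simp
qed

lemma exists_L_shift_onto:
  assumes tw_eq: "of_int (tw e) = 2 * e" and "weight e s \<noteq> 0"
  obtains m t where "m \<noteq> 0" "ad_src e (L m) t = s" "weight e t = weight e s + 2 * m"
    "ad_coeff e (L m) t \<noteq> 0"
proof (cases s)
  case (L j)
  define m :: int where "m = (if j = 1 then 2 else 1)"
  have "m \<noteq> 0" "m \<noteq> j" by (auto simp: m_def)
  then show ?thesis using L that[of m "L (j + m)"] by simp
next
  case (Y j)
  define k where "k = 2 * j + tw e"
  define m :: int where "m = (if k = 1 then 2 else 1)"
  have "m \<noteq> 0" "m \<noteq> k" by (auto simp: m_def)
  have "ad_coeff e (L m) (Y (j + m)) = of_int (m - k) / 2"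
    using tw_eq by (simp add: k_def field_simps)
  also have "\<dots> \<noteq> 0" using \<open>m \<noteq> k\<close> by (simp del: of_int_diff)
  finally show ?thesis
    using Y \<open>m \<noteq> 0\<close> that[of m "Y (j + m)"] by (simp add: k_def del: ad_coeff.simps)
next
  case (M j)
  then show ?thesis using assms that[of 1 "M (j + 1)"] by simp
qed

lemma exists_bracket_decomposition:
  assumes tw_eq: "of_int (tw e) = 2 * e"
  obtains x y where "bracket_coeff e x y \<noteq> 0" "bracket_basis e x y = s"
    "weight e x \<noteq> weight e s" "weight e y \<noteq> weight e s"
proof (cases s)
  case (L n)
  show ?thesis
  proof (cases "n = 0")
    case True
    then show ?thesis using L that[of "L 1" "L (-1)"] by simp
  next
    case False
    then show ?thesis using L that[of "L (2 * n)" "L (- n)"] by simp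
  qed
next
  case (Y j)
  define k where "k = 2 * j + tw e"
  define m where "m = 2 * k + 1"
  have "bracket_coeff e (L m) (Y (j - m)) = of_int (5 * k + 3) / 2"
    using tw_eq by (simp add: m_def k_def field_simps)
  also have "\<dots> \<noteq> 0" by (simp del: of_int_add of_int_mult, presburger)
  finally have "bracket_coeff e (L m) (Y (j - m)) \<noteq> 0" .
  moreover have "weight e (L m) \<noteq> weight e s" "weight e (Y (j - m)) \<noteq> weight e s"
    using Y tw_cases[of e] unfolding m_def k_def by (simp_all, presburger+)
  ultimately show ?thesis using Y that[of "L m" "Y (j - m)"] by (simp del: bracket_coeff.simps)
next
  case (M j)
  define m where "m = (if j = -1 then 1 else j + 1)"
  have "m \<noteq> 0" "m \<noteq> j" by (auto simp: m_def)
  then show ?thesis using M that[of "L m" "M (j - m)"] by simp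
qed

locale basis_bider =
  fixes e :: complex and G :: "svb \<Rightarrow> svb \<Rightarrow> sv"
  assumes tw_eq: "of_int (tw e) = 2 * e"
    and left: "bider_left e G" and right: "bider_right e G"
begin

lemma left_eq:
  "bracket_coeff e a b * G (bracket_basis e a b) c t = ad e a (G b c) t - ad e b (G a c) t"
  using left unfolding bider_left_def by blast

lemma right_eq:
  "bracket_coeff e b c * G a (bracket_basis e b c) t = ad e b (G a c) t - ad e c (G a b) t"
  using right unfolding bider_right_def by blast

lemma weight_eq_left:
  "of_int (weight e t - weight e b) * G b c t = - 2 * ad e b (G (L 0) c) t"
  using left_eq[of "L 0" b c t] tw_eq by (simp add: bracket_coeff_L0 ad_def ad_coeff_L0 field_simps)

lemma weight_eq_right:
  "of_int (weight e t - weight e c) * G a c t = - 2 * ad e c (G a (L 0)) t"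
  using right_eq[of "L 0" c a t] tw_eq by (simp add: bracket_coeff_L0 ad_def ad_coeff_L0 field_simps)

lemma L0_L0_L_component: "G (L 0) (L 0) (L k) = 0"
proof (cases "k = 0")
  case True
  then show ?thesis using weight_eq_right[of "L 1" "L 1" "L 0"] by (simp add: ad_def)
next
  case False
  have "G (L k) (L (2 * k)) (L (4 * k)) = 0"
    using weight_eq_right[of "L (4 * k)" "L (2 * k)" "L k"] False by (simp add: ad_def)
  then have "G (L 0) (L (2 * k)) (L (3 * k)) = 0"
    using weight_eq_left[of "L (4 * k)" "L k" "L (2 * k)"] False by (simp add: ad_def)
  then show ?thesis
    using weight_eq_right[of "L (3 * k)" "L (2 * k)" "L 0"] False by (simp add: ad_def)
qed

lemma L0_L0_Y_component: "G (L 0) (L 0) (Y k) = 0"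
proof (cases "2 * k + tw e = 0")
  case True
  then have "tw e = 0" "k = 0" using tw_cases[of e] by presburger+
  then show ?thesis
    using weight_eq_right[of "Y 1" "L 1" "L 0"] tw_eq by (simp add: ad_def)
next
  case False
  define q where "q = 2 * k + tw e"
  have q: "q \<noteq> 0" using False q_def by simp
  have coeff1: "ad_coeff e (L q) (Y (k + q)) = 0"
    and coeff2: "ad_coeff e (L q) (Y (k + 3 * q)) = - of_int (2 * q)"
    and coeff3: "ad_coeff e (L (2 * q)) (Y (k + 2 * q)) = of_int q / 2"
    using tw_eq by (simp_all add: q_def field_simps)
  have weight1: "weight e (Y (k + q)) - weight e (L q) = q"
    and weight2: "weight e (Y (k + 3 * q)) - weight e (L (2 * q)) = 3 * q"
    by (simp_all add: q_def)
  have "G (L q) (L 0) (Y (k + q)) = 0"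
    using weight_eq_left[of "Y (k + q)" "L q" "L 0", unfolded ad_def coeff1 weight1] q by simp
  then have "G (L q) (L (2 * q)) (Y (k + 3 * q)) = 0"
    using weight_eq_right[of "Y (k + 3 * q)" "L (2 * q)" "L q", unfolded ad_def weight2] q
    by (simp add: ac_simps)
  then have "G (L 0) (L (2 * q)) (Y (k + 2 * q)) = 0"
    using weight_eq_left[of "Y (k + 3 * q)" "L q" "L (2 * q)", unfolded ad_def coeff2] q
    by (simp add: ac_simps)
  then show ?thesis
    using weight_eq_right[of "Y (k + 2 * q)" "L (2 * q)" "L 0", unfolded ad_def coeff3] q
    by (simp add: ac_simps)
qed

end

locale normalised_basis_bider = basis_bider +
  assumes L0_L0_zero: "G (L 0) (L 0) = (\<lambda>_. 0)"
    and L0_L1_L1: "G (L 0) (L 1) (L 1) = 0"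
begin

lemma L0_left_homogeneous: "weight e t \<noteq> weight e c \<Longrightarrow> G (L 0) c t = 0"
  using weight_eq_right[of t c "L 0"] by (simp add: L0_L0_zero)

lemma L0_right_homogeneous: "weight e t \<noteq> weight e b \<Longrightarrow> G b (L 0) t = 0"
  using weight_eq_left[of t b "L 0"] by (simp add: L0_L0_zero)

lemma L0_Ln_L_component:
  assumes "n \<noteq> 0"
  shows "G (L 0) (L n) (L n) = 0" and "G (L n) (L 0) (L n) = 0"
proof -
  have rel: "of_int m * of_int (k - m) * G (L 0) (L k) (L k)
      = of_int k * of_int (m - k) * G (L m) (L 0) (L m)" if "m \<noteq> 0" "k \<noteq> 0" for m k
  proof -
    have "2 * of_int k * G (L m) (L k) (L (m + k)) = 2 * (of_int k - of_int m) * G (L 0) (L k) (L k)"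
      using weight_eq_left[of "L (m + k)" "L m" "L k"] by (simp add: ad_def algebra_simps)
    moreover have "2 * of_int m * G (L m) (L k) (L (m + k)) = 2 * (of_int m - of_int k) * G (L m) (L 0) (L m)"
      using weight_eq_right[of "L (m + k)" "L k" "L m"] by (simp add: ad_def algebra_simps)
    ultimately show ?thesis by (simp add: algebra_simps) algebra
  qed
  show "G (L 0) (L n) (L n) = 0" and "G (L n) (L 0) (L n) = 0"
    using scalar_relation_LL_vanishes[of "\<lambda>k. G (L 0) (L k) (L k)" "\<lambda>m. G (L m) (L 0) (L m)",
        OF rel L0_L1_L1 assms] by simp_all
qed

lemma L0_Ln_M_component:
  assumes n: "n \<noteq> 0"
  shows "G (L 0) (L n) (M n) = 0" and "G (L n) (L 0) (M n) = 0"
proof -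
  have rel: "G (L 0) (L k) (M k) = G (L m) (L 0) (M m)" if "m \<noteq> 0" "k \<noteq> 0" for m k
  proof -
    have "of_int k * G (L m) (L k) (M (m + k)) = of_int k * G (L 0) (L k) (M k)"
      using weight_eq_left[of "M (m + k)" "L m" "L k"] by (simp add: ad_def algebra_simps)
    moreover have "of_int m * G (L m) (L k) (M (m + k)) = of_int m * G (L m) (L 0) (M m)"
      using weight_eq_right[of "M (m + k)" "L k" "L m"] by (simp add: ad_def algebra_simps)
    ultimately show ?thesis using that by simp
  qed
  have "G (L 0) (L 1) (M 1) + G (L 0) (L (-1)) (M (-1)) = 0"
    using right_eq[of "L 1" "L (-1)" "L 0" "M 0"] by (simp add: L0_L0_zero ad_def add_ac)
  moreover have "G (L 0) (L 1) (M 1) = G (L 0) (L (-1)) (M (-1))"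
    using rel[of 1 1] rel[of 1 "-1"] by simp
  ultimately have "G (L 0) (L 1) (M 1) = 0" by simp
  then show "G (L 0) (L n) (M n) = 0" and "G (L n) (L 0) (M n) = 0"
    using rel[of 1 n] rel[of 1 1] rel[of n 1] n by simp_all
qed

lemma L0_Ln_Y_component:
  assumes "tw e = 0" and "n \<noteq> 0"
  shows "G (L 0) (L n) (Y n) = 0" and "G (L n) (L 0) (Y n) = 0"
proof -
  have "e = 0" using tw_eq assms(1) by simp
  have rel: "of_int m * (of_int m / 2 - of_int k) * G (L 0) (L k) (Y k)
      = of_int k * (of_int k / 2 - of_int m) * G (L m) (L 0) (Y m)" if "m \<noteq> 0" "k \<noteq> 0" for m k
  proof -
    have "2 * of_int k * G (L m) (L k) (Y (m + k)) = - 2 * (of_int m / 2 - of_int k) * G (L 0) (L k) (Y k)"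
      using weight_eq_left[of "Y (m + k)" "L m" "L k"] assms(1) \<open>e = 0\<close>
      by (simp add: ad_def algebra_simps)
    moreover have "2 * of_int m * G (L m) (L k) (Y (m + k)) = - 2 * (of_int k / 2 - of_int m) * G (L m) (L 0) (Y m)"
      using weight_eq_right[of "Y (m + k)" "L k" "L m"] assms(1) \<open>e = 0\<close>
      by (simp add: ad_def algebra_simps)
    ultimately show ?thesis by algebra
  qed
  show "G (L 0) (L n) (Y n) = 0" and "G (L n) (L 0) (Y n) = 0"
    using scalar_relation_LY_vanishes[of "\<lambda>k. G (L 0) (L k) (Y k)" "\<lambda>m. G (L m) (L 0) (Y m)",
        OF rel assms(2)] by simp_all
qed

lemma L0_Ln_zero:
  assumes n: "n \<noteq> 0"
  shows "G (L 0) (L n) = (\<lambda>_. 0)" and "G (L n) (L 0) = (\<lambda>_. 0)"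
proof -
  have "G (L 0) (L n) t = 0 \<and> G (L n) (L 0) t = 0" for t
  proof (cases "weight e t = weight e (L n)")
    case False
    then show ?thesis using L0_left_homogeneous L0_right_homogeneous by blast
  next
    case True
    show ?thesis
    proof (cases t)
      case (L j)
      then show ?thesis using True L0_Ln_L_component[OF n] by simp
    next
      case (M j)
      then show ?thesis using True L0_Ln_M_component[OF n] by simp
    next
      case (Y j)
      with True have "tw e = 0 \<and> j = n" using tw_cases[of e] by (auto; presburger)
      then show ?thesis using Y L0_Ln_Y_component[OF _ n] by simp
    qed
  qed
  then show "G (L 0) (L n) = (\<lambda>_. 0)" and "G (L n) (L 0) = (\<lambda>_. 0)"
    by auto
qed

(* The s-coefficient of G (L 0) c is a nonzero multiple of the t-coefficient of G (L m) c,
   which vanishes because t and c have different weights. *)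
lemma L0_left_zero_of_weight_ne0:
  assumes c: "weight e c \<noteq> 0"
  shows "G (L 0) c = (\<lambda>_. 0)"
proof
  fix s
  show "G (L 0) c s = 0"
  proof (cases "weight e s = weight e c")
    case False
    then show ?thesis by (rule L0_left_homogeneous)
  next
    case True
    with c obtain m t where m: "m \<noteq> 0" and src: "ad_src e (L m) t = s"
      and wt: "weight e t = weight e s + 2 * m" and coeff: "ad_coeff e (L m) t \<noteq> 0"
      using exists_L_shift_onto[OF tw_eq] by metis
    have "G (L m) c t = 0"
      using weight_eq_right[of t c "L m"] L0_Ln_zero(2)[OF m] True wt m by simp
    then show ?thesis
      using weight_eq_left[of t "L m" c] coeff src by (simp add: ad_def)
  qed
qed

lemma L0_right_zero_of_weight_ne0:
  assumes b: "weight e b \<noteq> 0"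
  shows "G b (L 0) = (\<lambda>_. 0)"
proof
  fix s
  show "G b (L 0) s = 0"
  proof (cases "weight e s = weight e b")
    case False
    then show ?thesis by (rule L0_right_homogeneous)
  next
    case True
    with b obtain m t where m: "m \<noteq> 0" and src: "ad_src e (L m) t = s"
      and wt: "weight e t = weight e s + 2 * m" and coeff: "ad_coeff e (L m) t \<noteq> 0"
      using exists_L_shift_onto[OF tw_eq] by metis
    have "G b (L m) t = 0"
      using weight_eq_left[of t b "L m"] L0_Ln_zero(1)[OF m] True wt m by simp
    then show ?thesis
      using weight_eq_right[of t "L m" b] coeff src by (simp add: ad_def)
  qed
qed

lemma L0_left_zero: "G (L 0) c = (\<lambda>_. 0)"
proof (cases "weight e c = 0")
  case False
  then show ?thesis by (rule L0_left_zero_of_weight_ne0)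
next
  case True
  obtain x y where "bracket_coeff e x y \<noteq> 0" "bracket_basis e x y = c"
    "weight e x \<noteq> weight e c" "weight e y \<noteq> weight e c"
    using exists_bracket_decomposition[OF tw_eq] .
  then show ?thesis
    using right_eq[of x y "L 0"] True L0_left_zero_of_weight_ne0[of x] L0_left_zero_of_weight_ne0[of y]
    by (simp add: fun_eq_iff)
qed

lemma L0_right_zero: "G b (L 0) = (\<lambda>_. 0)"
proof (cases "weight e b = 0")
  case False
  then show ?thesis by (rule L0_right_zero_of_weight_ne0)
next
  case True
  obtain x y where "bracket_coeff e x y \<noteq> 0" "bracket_basis e x y = b"
    "weight e x \<noteq> weight e b" "weight e y \<noteq> weight e b"
    using exists_bracket_decomposition[OF tw_eq] .
  then show ?thesis
    using left_eq[of x y "L 0"] True L0_right_zero_of_weight_ne0[of x] L0_right_zero_of_weight_ne0[of y]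
    by (simp add: fun_eq_iff)
qed

lemma zero_of_weight_ne:
  assumes "weight e b \<noteq> weight e c"
  shows "G b c = (\<lambda>_. 0)"
proof
  fix t
  show "G b c t = 0"
  proof (cases "weight e t = weight e b")
    case False
    then show ?thesis using weight_eq_left[of t b c] by (simp add: L0_left_zero)
  next
    case True
    then show ?thesis using assms weight_eq_right[of t c b] by (simp add: L0_right_zero)
  qed
qed

lemma zero: "G a b = (\<lambda>_. 0)"
proof (cases "weight e a = weight e b")
  case False
  then show ?thesis by (rule zero_of_weight_ne)
next
  case True
  obtain x y where "bracket_coeff e x y \<noteq> 0" "bracket_basis e x y = a"
    "weight e x \<noteq> weight e a" "weight e y \<noteq> weight e a"
    using exists_bracket_decomposition[OF tw_eq] .
  then show ?thesis
    using left_eq[of x y b] True zero_of_weight_ne[of x b] zero_of_weight_ne[of y b]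
    by (simp add: fun_eq_iff)
qed

end

context basis_bider
begin

lemma eq_bracket_plus_chib:
  assumes fin: "finite (supp (G (L 0) (L 0)))"
  obtains lam \<mu> where "finite {i. \<mu> i \<noteq> 0}"
    and "\<And>a b. G a b = (\<lambda>t. lam * brb e a b t + chib \<mu> a b t)"
proof -
  define \<mu> where "\<mu> i = G (L 0) (L 0) (M i)" for i
  define lam where "lam = - G (L 0) (L 1) (L 1)"
  define g where "g a b t = G a b t - lam * brb e a b t - chib \<mu> a b t" for a b t
  have "g = (\<lambda>a b t. 1 * (\<lambda>a b t. 1 * G a b t + (- lam) * brb e a b t) a b t + (- 1) * chib \<mu> a b t)"
    by (simp add: g_def fun_eq_iff)
  then have "bider_left e g" "bider_right e g"
    by (simp_all only: bider_left_lincomb bider_right_lincomb left right tw_eq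
        bider_left_brb bider_right_brb bider_left_chib bider_right_chib)
  moreover have "g (L 0) (L 0) = (\<lambda>_. 0)"
    by (auto simp: g_def fun_eq_iff sc_def \<mu>_def L0_L0_L_component L0_L0_Y_component split: svb.split)
  moreover have "g (L 0) (L 1) (L 1) = 0"
    by (simp add: g_def lam_def sc_def)
  ultimately interpret g: normalised_basis_bider e g
    using tw_eq by unfold_locales
  have "{i. \<mu> i \<noteq> 0} = M -` supp (G (L 0) (L 0))"
    by (auto simp: \<mu>_def supp_def)
  then have "finite {i. \<mu> i \<noteq> 0}"
    using fin by (simp add: finite_vimageI inj_def)
  moreover have "G a b = (\<lambda>t. lam * brb e a b t + chib \<mu> a b t)" for a b
    using g.zero[of a b] by (simp add: g_def fun_eq_iff algebra_simps)
  ultimately show ?thesis using that by blast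
qed

end

section \<open>Bilinear extension of kernels\<close>

definition bilin_ext :: "(svb \<Rightarrow> svb \<Rightarrow> sv) \<Rightarrow> sv \<Rightarrow> sv \<Rightarrow> sv" where
  "bilin_ext K x y = (\<lambda>t. \<Sum>p\<in>supp x. \<Sum>q\<in>supp y. x p * y q * K p q t)"

lemma br_eq_bilin_ext: "br e = bilin_ext (brb e)"
  by (simp add: br_def bilin_ext_def fun_eq_iff)

lemma chi_eq_bilin_ext: "chi \<mu> = bilin_ext (chib \<mu>)"
  by (simp add: chi_def bilin_ext_def fun_eq_iff)

lemma supp_sc: "supp (sc k b) = (if k = 0 then {} else {b})"
  by (auto simp: supp_def sc_def)

lemma sc_in_SV: "sc k b \<in> SV"
  by (simp add: SV_def supp_sc)

lemma sc_eq_smul: "sc k b = smul k (sc 1 b)"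
  by (simp add: sc_def smul_def fun_eq_iff)

lemma finite_supp_brb: "finite (supp (brb e p q))"
  by (simp add: brb_eq_sc supp_sc)

lemma finite_supp_chib:
  assumes "finite {i. \<mu> i \<noteq> 0}"
  shows "finite (supp (chib \<mu> p q))"
proof (cases "\<exists>m n. p = L m \<and> q = L n")
  case True
  then obtain m n where pq: "p = L m" "q = L n" by blast
  have "supp (chib \<mu> p q) \<subseteq> (\<lambda>i. M (i + m + n)) ` {i. \<mu> i \<noteq> 0}"
  proof
    fix t
    assume "t \<in> supp (chib \<mu> p q)"
    then obtain k where "t = M k" "\<mu> (k - m - n) \<noteq> 0"
      using pq by (cases t) (auto simp: supp_def)
    then show "t \<in> (\<lambda>i. M (i + m + n)) ` {i. \<mu> i \<noteq> 0}"
      by (intro image_eqI[where x = "k - m - n"]) auto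
  qed
  then show ?thesis using assms by (auto intro: finite_subset)
next
  case False
  then have "chib \<mu> p q = (\<lambda>_. 0)" by (cases p; cases q) auto
  then show ?thesis by (simp add: supp_def)
qed

lemma sum_supp_eq_superset:
  assumes "finite S" "supp w \<subseteq> S"
  shows "(\<Sum>s\<in>supp w. w s * g s) = (\<Sum>s\<in>S. w s * g s)"
  by (rule sum.mono_neutral_left) (use assms in \<open>auto simp: supp_def\<close>)

lemma supp_bilin_ext_subset: "supp (bilin_ext K x y) \<subseteq> (\<Union>p\<in>supp x. \<Union>q\<in>supp y. supp (K p q))"
proof
  fix t
  assume "t \<in> supp (bilin_ext K x y)"
  then have "bilin_ext K x y t \<noteq> 0" by (simp add: supp_def)
  then obtain p q where "p \<in> supp x" "q \<in> supp y" "K p q t \<noteq> 0"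
    unfolding bilin_ext_def by (metis (mono_tags, lifting) mult_zero_right sum.neutral)
  then show "t \<in> (\<Union>p\<in>supp x. \<Union>q\<in>supp y. supp (K p q))" by (auto simp: supp_def)
qed

lemma bilin_ext_in_SV:
  assumes "x \<in> SV" "y \<in> SV" "\<And>p q. finite (supp (K p q))"
  shows "bilin_ext K x y \<in> SV"
  using assms supp_bilin_ext_subset[of K x y] unfolding SV_def by (auto intro: finite_subset)

lemma sum_rotate3:
  "(\<Sum>s\<in>S. \<Sum>q\<in>B. \<Sum>r\<in>C. f s q r) = (\<Sum>q\<in>B. \<Sum>r\<in>C. \<Sum>s\<in>S. f s q r)"
  by (subst sum.swap) (rule sum.cong[OF refl], rule sum.swap)

lemma sum_rotate4:
  "(\<Sum>s\<in>S. \<Sum>p\<in>A. \<Sum>q\<in>B. \<Sum>r\<in>C. f s p q r) = (\<Sum>p\<in>A. \<Sum>q\<in>B. \<Sum>r\<in>C. \<Sum>s\<in>S. f s p q r)"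
  by (subst sum.swap) (rule sum.cong[OF refl], rule sum_rotate3)

lemma bilin_ext_nested_left:
  assumes x: "x \<in> SV" and y: "y \<in> SV" and K2: "\<And>p q. finite (supp (K2 p q))"
  shows "bilin_ext K1 (bilin_ext K2 x y) z t = (\<Sum>p\<in>supp x. \<Sum>q\<in>supp y. \<Sum>r\<in>supp z.
            x p * y q * z r * (\<Sum>s\<in>supp (K2 p q). K2 p q s * K1 s r t))"
proof -
  define S where "S = (\<Union>p\<in>supp x. \<Union>q\<in>supp y. supp (K2 p q))"
  have S: "finite S" using x y K2 by (auto simp: S_def SV_def)
  have "bilin_ext K1 (bilin_ext K2 x y) z t
      = (\<Sum>s\<in>supp (bilin_ext K2 x y). bilin_ext K2 x y s * (\<Sum>r\<in>supp z. z r * K1 s r t))"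
    by (simp add: bilin_ext_def sum_distrib_left mult.assoc)
  also have "\<dots> = (\<Sum>s\<in>S. bilin_ext K2 x y s * (\<Sum>r\<in>supp z. z r * K1 s r t))"
    by (rule sum_supp_eq_superset[OF S]) (unfold S_def, rule supp_bilin_ext_subset)
  also have "\<dots> = (\<Sum>s\<in>S. \<Sum>p\<in>supp x. \<Sum>q\<in>supp y. \<Sum>r\<in>supp z. x p * y q * z r * (K2 p q s * K1 s r t))"
    by (simp add: bilin_ext_def sum_distrib_left sum_distrib_right algebra_simps)
  also have "\<dots> = (\<Sum>p\<in>supp x. \<Sum>q\<in>supp y. \<Sum>r\<in>supp z. \<Sum>s\<in>S. x p * y q * z r * (K2 p q s * K1 s r t))"
    by (rule sum_rotate4)
  also have "\<dots> = (\<Sum>p\<in>supp x. \<Sum>q\<in>supp y. \<Sum>r\<in>supp z. x p * y q * z r * (\<Sum>s\<in>S. K2 p q s * K1 s r t))"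
    by (simp add: sum_distrib_left)
  also have "\<dots> = (\<Sum>p\<in>supp x. \<Sum>q\<in>supp y. \<Sum>r\<in>supp z. x p * y q * z r * (\<Sum>s\<in>supp (K2 p q). K2 p q s * K1 s r t))"
    by (intro sum.cong refl arg_cong2[where f = "(*)"] sum_supp_eq_superset[OF S, symmetric])
      (auto simp: S_def)
  finally show ?thesis .
qed

lemma bilin_ext_nested_right:
  assumes y: "y \<in> SV" and z: "z \<in> SV" and K2: "\<And>p q. finite (supp (K2 p q))"
  shows "bilin_ext K1 x (bilin_ext K2 y z) t = (\<Sum>p\<in>supp x. \<Sum>q\<in>supp y. \<Sum>r\<in>supp z.
            x p * y q * z r * (\<Sum>s\<in>supp (K2 q r). K2 q r s * K1 p s t))"
proof -
  define S where "S = (\<Union>q\<in>supp y. \<Union>r\<in>supp z. supp (K2 q r))"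
  have S: "finite S" using y z K2 by (auto simp: S_def SV_def)
  have "bilin_ext K1 x (bilin_ext K2 y z) t
      = (\<Sum>p\<in>supp x. x p * (\<Sum>s\<in>supp (bilin_ext K2 y z). bilin_ext K2 y z s * K1 p s t))"
    by (simp only: bilin_ext_def[of K1] sum_distrib_left mult.assoc)
  also have "\<dots> = (\<Sum>p\<in>supp x. x p * (\<Sum>s\<in>S. bilin_ext K2 y z s * K1 p s t))"
    by (intro sum.cong refl arg_cong2[where f = "(*)"] sum_supp_eq_superset[OF S])
      (unfold S_def, rule supp_bilin_ext_subset)
  also have "\<dots> = (\<Sum>p\<in>supp x. \<Sum>s\<in>S. \<Sum>q\<in>supp y. \<Sum>r\<in>supp z. x p * y q * z r * (K2 q r s * K1 p s t))"
    by (simp add: bilin_ext_def sum_distrib_left sum_distrib_right algebra_simps)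
  also have "\<dots> = (\<Sum>p\<in>supp x. \<Sum>q\<in>supp y. \<Sum>r\<in>supp z. \<Sum>s\<in>S. x p * y q * z r * (K2 q r s * K1 p s t))"
    by (rule sum.cong[OF refl], rule sum_rotate3)
  also have "\<dots> = (\<Sum>p\<in>supp x. \<Sum>q\<in>supp y. \<Sum>r\<in>supp z. x p * y q * z r * (\<Sum>s\<in>S. K2 q r s * K1 p s t))"
    by (simp add: sum_distrib_left)
  also have "\<dots> = (\<Sum>p\<in>supp x. \<Sum>q\<in>supp y. \<Sum>r\<in>supp z. x p * y q * z r * (\<Sum>s\<in>supp (K2 q r). K2 q r s * K1 p s t))"
    by (intro sum.cong refl arg_cong2[where f = "(*)"] sum_supp_eq_superset[OF S, symmetric])
      (auto simp: S_def)
  finally show ?thesis .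
qed

lemma brb_antisym: "brb e p b t = - brb e b p t"
  by (cases p; cases b) (auto simp: sc_def)

lemma sum_brb_left_eq_ad:
  assumes "finite (supp w)"
  shows "(\<Sum>s\<in>supp w. w s * brb e a s t) = ad e a w t"
proof -
  have "(\<Sum>s\<in>supp w. w s * brb e a s t) = (\<Sum>s\<in>supp w. if s = ad_src e a t then w s * ad_coeff e a t else 0)"
    by (rule sum.cong) (auto simp: brb_eq_ad_monomial)
  also have "\<dots> = ad e a w t"
    using assms by (auto simp: sum.delta' ad_def supp_def)
  finally show ?thesis .
qed

lemma sum_brb_right_eq_ad:
  assumes "finite (supp w)"
  shows "(\<Sum>s\<in>supp w. w s * brb e s b t) = - ad e b w t"
  using sum_brb_left_eq_ad[OF assms] by (simp add: brb_antisym[of e _ b t] sum_negf)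

lemma sum_brb_eq_bracket:
  "(\<Sum>s\<in>supp (brb e p q). brb e p q s * g s) = bracket_coeff e p q * g (bracket_basis e p q)"
  by (simp add: brb_eq_sc supp_sc) (simp add: sc_def)

lemma bilin_ext_bider_left:
  assumes H: "bider_left e H" and HF: "\<And>p q. finite (supp (H p q))"
    and x: "x \<in> SV" and y: "y \<in> SV" and z: "z \<in> SV"
  shows "bilin_ext H (br e x y) z = vadd (br e x (bilin_ext H y z)) (br e (bilin_ext H x z) y)"
proof
  fix t
  note H_eq = H[unfolded bider_left_def, rule_format]
  have "bilin_ext H (br e x y) z t = (\<Sum>p\<in>supp x. \<Sum>q\<in>supp y. \<Sum>r\<in>supp z.
      x p * y q * z r * (bracket_coeff e p q * H (bracket_basis e p q) r t))"
    by (simp add: br_eq_bilin_ext bilin_ext_nested_left[OF x y finite_supp_brb] sum_brb_eq_bracket)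
  also have "\<dots> = (\<Sum>p\<in>supp x. \<Sum>q\<in>supp y. \<Sum>r\<in>supp z.
      x p * y q * z r * ad e p (H q r) t + x p * y q * z r * (- ad e q (H p r) t))"
    by (intro sum.cong refl) (simp only: H_eq, simp add: algebra_simps)
  also have "\<dots> = br e x (bilin_ext H y z) t + br e (bilin_ext H x z) y t"
  proof -
    have "br e x (bilin_ext H y z) t = (\<Sum>p\<in>supp x. \<Sum>q\<in>supp y. \<Sum>r\<in>supp z.
        x p * y q * z r * ad e p (H q r) t)"
      by (simp add: br_eq_bilin_ext bilin_ext_nested_right[OF y z HF] sum_brb_left_eq_ad[OF HF])
    moreover have "br e (bilin_ext H x z) y t = (\<Sum>p\<in>supp x. \<Sum>q\<in>supp y. \<Sum>r\<in>supp z.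
        x p * y q * z r * (- ad e q (H p r) t))"
    proof -
      have "br e (bilin_ext H x z) y t = (\<Sum>p\<in>supp x. \<Sum>r\<in>supp z. \<Sum>q\<in>supp y.
          x p * z r * y q * (- ad e q (H p r) t))"
        by (simp add: br_eq_bilin_ext bilin_ext_nested_left[OF x z HF] sum_brb_right_eq_ad[OF HF])
      also have "\<dots> = (\<Sum>p\<in>supp x. \<Sum>q\<in>supp y. \<Sum>r\<in>supp z. x p * z r * y q * (- ad e q (H p r) t))"
        by (rule sum.cong[OF refl], rule sum.swap)
      finally show ?thesis by (simp add: algebra_simps)
    qed
    ultimately show ?thesis by (simp only: sum.distrib)
  qed
  finally show "bilin_ext H (br e x y) z t = vadd (br e x (bilin_ext H y z)) (br e (bilin_ext H x z) y) t"
    by (simp add: vadd_def)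
qed

lemma bilin_ext_bider_right:
  assumes H: "bider_right e H" and HF: "\<And>p q. finite (supp (H p q))"
    and x: "x \<in> SV" and y: "y \<in> SV" and z: "z \<in> SV"
  shows "bilin_ext H x (br e y z) = vadd (br e (bilin_ext H x y) z) (br e y (bilin_ext H x z))"
proof
  fix t
  note H_eq = H[unfolded bider_right_def, rule_format]
  have "bilin_ext H x (br e y z) t = (\<Sum>p\<in>supp x. \<Sum>q\<in>supp y. \<Sum>r\<in>supp z.
      x p * y q * z r * (bracket_coeff e q r * H p (bracket_basis e q r) t))"
    by (simp add: br_eq_bilin_ext bilin_ext_nested_right[OF y z finite_supp_brb] sum_brb_eq_bracket)
  also have "\<dots> = (\<Sum>p\<in>supp x. \<Sum>q\<in>supp y. \<Sum>r\<in>supp z.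
      x p * y q * z r * (- ad e r (H p q) t) + x p * y q * z r * ad e q (H p r) t)"
    by (intro sum.cong refl) (simp only: H_eq, simp add: algebra_simps)
  also have "\<dots> = br e (bilin_ext H x y) z t + br e y (bilin_ext H x z) t"
  proof -
    have "br e (bilin_ext H x y) z t = (\<Sum>p\<in>supp x. \<Sum>q\<in>supp y. \<Sum>r\<in>supp z.
        x p * y q * z r * (- ad e r (H p q) t))"
      by (simp add: br_eq_bilin_ext bilin_ext_nested_left[OF x y HF] sum_brb_right_eq_ad[OF HF])
    moreover have "br e y (bilin_ext H x z) t = (\<Sum>p\<in>supp x. \<Sum>q\<in>supp y. \<Sum>r\<in>supp z.
        x p * y q * z r * ad e q (H p r) t)"
    proof -
      have "br e y (bilin_ext H x z) t = (\<Sum>q\<in>supp y. \<Sum>p\<in>supp x. \<Sum>r\<in>supp z.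
          y q * x p * z r * ad e q (H p r) t)"
        by (simp add: br_eq_bilin_ext bilin_ext_nested_right[OF x z HF] sum_brb_left_eq_ad[OF HF])
      also have "\<dots> = (\<Sum>p\<in>supp x. \<Sum>q\<in>supp y. \<Sum>r\<in>supp z. y q * x p * z r * ad e q (H p r) t)"
        by (rule sum.swap)
      finally show ?thesis by (simp add: algebra_simps)
    qed
    ultimately show ?thesis by (simp only: sum.distrib)
  qed
  finally show "bilin_ext H x (br e y z) t = vadd (br e (bilin_ext H x y) z) (br e y (bilin_ext H x z)) t"
    by (simp add: vadd_def)
qed

lemma basis_expansion:
  assumes add: "\<forall>u\<in>SV. \<forall>v\<in>SV. \<phi> (vadd u v) = vadd (\<phi> u) (\<phi> v)"
    and hom: "\<forall>c. \<forall>u\<in>SV. \<phi> (smul c u) = smul c (\<phi> u)"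
    and x: "x \<in> SV"
  shows "\<phi> x t = (\<Sum>p\<in>supp x. x p * \<phi> (sc 1 p) t)"
proof -
  define restr where "restr S = (\<lambda>b. if b \<in> S then x b else 0)" for S
  have restr_SV: "restr S \<in> SV" if "finite S" for S
    using that by (auto simp: SV_def supp_def restr_def intro: finite_subset)
  have "\<phi> (restr S) t = (\<Sum>p\<in>S. x p * \<phi> (sc 1 p) t)" if "finite S" for S
    using that
  proof (induction S rule: finite_induct)
    case empty
    have "(\<lambda>_. 0) \<in> SV" by (simp add: SV_def supp_def)
    moreover have "restr {} = smul 0 (\<lambda>_. 0)" by (simp add: restr_def smul_def)
    ultimately have "\<phi> (restr {}) = smul 0 (\<phi> (\<lambda>_. 0))" using hom by simp
    then show ?case by (simp add: smul_def)
  next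
    case (insert p S)
    have "restr (insert p S) = vadd (restr S) (smul (x p) (sc 1 p))"
      using insert by (auto simp: restr_def vadd_def smul_def sc_def fun_eq_iff)
    moreover have "smul (x p) (sc 1 p) \<in> SV" by (simp add: sc_eq_smul[symmetric] sc_in_SV)
    ultimately have "\<phi> (restr (insert p S)) = vadd (\<phi> (restr S)) (smul (x p) (\<phi> (sc 1 p)))"
      using add hom restr_SV[OF insert(1)] sc_in_SV by simp
    then show ?case using insert by (simp add: vadd_def smul_def)
  qed
  moreover have "restr (supp x) = x" by (auto simp: restr_def supp_def fun_eq_iff)
  ultimately show ?thesis using x by (metis SV_def mem_Collect_eq)
qed

lemma bilinear_sv_eq_bilin_ext:
  assumes f: "bilinear_sv f" and x: "x \<in> SV" and y: "y \<in> SV"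
  shows "f x y = bilin_ext (\<lambda>p q. f (sc 1 p) (sc 1 q)) x y"
proof
  fix t
  have "f x y t = (\<Sum>p\<in>supp x. x p * f (sc 1 p) y t)"
    by (rule basis_expansion[where \<phi> = "\<lambda>x. f x y"]) (use f y x in \<open>auto simp: bilinear_sv_def\<close>)
  moreover have "f (sc 1 p) y t = (\<Sum>q\<in>supp y. y q * f (sc 1 p) (sc 1 q) t)" for p
    by (rule basis_expansion[where \<phi> = "f (sc 1 p)"]) (use f y sc_in_SV in \<open>auto simp: bilinear_sv_def\<close>)
  ultimately show "f x y t = bilin_ext (\<lambda>p q. f (sc 1 p) (sc 1 q)) x y t"
    by (simp add: bilin_ext_def sum_distrib_left mult.assoc)
qed

lemma bracket_plus_chi_eq_bilin_ext:
  "vadd (smul lam (br e x y)) (chi \<mu> x y) = bilin_ext (\<lambda>p q t. lam * brb e p q t + chib \<mu> p q t) x y"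
  by (simp add: br_eq_bilin_ext chi_eq_bilin_ext bilin_ext_def vadd_def smul_def fun_eq_iff
      sum_distrib_left sum.distrib algebra_simps)

lemma br_sc_sc: "br e (sc 1 a) (sc 1 b) = brb e a b"
  unfolding br_def supp_sc by (simp add: sc_def fun_eq_iff)

lemma br_sc_left: "finite (supp w) \<Longrightarrow> br e (sc 1 a) w = ad e a w"
  by (simp add: br_def supp_sc fun_eq_iff sum_brb_left_eq_ad[symmetric]) (simp add: sc_def)

lemma br_sc_right: "finite (supp w) \<Longrightarrow> br e w (sc 1 b) = (\<lambda>t. - ad e b w t)"
  by (simp add: br_def supp_sc fun_eq_iff sum_brb_right_eq_ad[symmetric]) (simp add: sc_def)

section \<open>Biderivations of SV(\<epsilon>)\<close>

lemma biderivation_bider_basis: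
  assumes f: "bilinear_sv f" and bider: "biderivation e f"
  shows "bider_left e (\<lambda>p q. f (sc 1 p) (sc 1 q))" and "bider_right e (\<lambda>p q. f (sc 1 p) (sc 1 q))"
proof -
  have fin: "finite (supp (f (sc 1 p) (sc 1 q)))" for p q
    using f sc_in_SV unfolding bilinear_sv_def SV_def by blast
  have smul_left: "f (smul c (sc 1 a)) (sc 1 b) = smul c (f (sc 1 a) (sc 1 b))"
    and smul_right: "f (sc 1 a) (smul c (sc 1 b)) = smul c (f (sc 1 a) (sc 1 b))" for c a b
    using f sc_in_SV unfolding bilinear_sv_def by blast+
  show "bider_left e (\<lambda>p q. f (sc 1 p) (sc 1 q))"
    unfolding bider_left_def
  proof (intro allI)
    fix a b c t
    have "f (br e (sc 1 a) (sc 1 b)) (sc 1 c)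
        = vadd (br e (sc 1 a) (f (sc 1 b) (sc 1 c))) (br e (f (sc 1 a) (sc 1 c)) (sc 1 b))"
      using bider sc_in_SV unfolding biderivation_def by blast
    moreover have "f (br e (sc 1 a) (sc 1 b)) (sc 1 c)
        = smul (bracket_coeff e a b) (f (sc 1 (bracket_basis e a b)) (sc 1 c))"
      by (simp add: br_sc_sc brb_eq_sc sc_eq_smul[of "bracket_coeff e a b"] smul_left)
    ultimately show "bracket_coeff e a b * f (sc 1 (bracket_basis e a b)) (sc 1 c) t
        = ad e a (f (sc 1 b) (sc 1 c)) t - ad e b (f (sc 1 a) (sc 1 c)) t"
      by (simp add: br_sc_left br_sc_right fin smul_def vadd_def fun_eq_iff)
  qed
  show "bider_right e (\<lambda>p q. f (sc 1 p) (sc 1 q))"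
    unfolding bider_right_def
  proof (intro allI)
    fix a b c t
    have "f (sc 1 a) (br e (sc 1 b) (sc 1 c))
        = vadd (br e (f (sc 1 a) (sc 1 b)) (sc 1 c)) (br e (sc 1 b) (f (sc 1 a) (sc 1 c)))"
      using bider sc_in_SV unfolding biderivation_def by blast
    moreover have "f (sc 1 a) (br e (sc 1 b) (sc 1 c))
        = smul (bracket_coeff e b c) (f (sc 1 a) (sc 1 (bracket_basis e b c)))"
      by (simp add: br_sc_sc brb_eq_sc sc_eq_smul[of "bracket_coeff e b c"] smul_right)
    ultimately show "bracket_coeff e b c * f (sc 1 a) (sc 1 (bracket_basis e b c)) t
        = ad e b (f (sc 1 a) (sc 1 c)) t - ad e c (f (sc 1 a) (sc 1 b)) t"
      by (simp add: br_sc_left br_sc_right fin smul_def vadd_def fun_eq_iff)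
  qed
qed

lemma biderivation_imp_bracket_plus_chi:
  assumes tw_eq: "of_int (tw e) = 2 * e" and f: "bilinear_sv f" and bider: "biderivation e f"
  obtains lam \<mu> where "finite {i. \<mu> i \<noteq> 0}"
    and "\<forall>x\<in>SV. \<forall>y\<in>SV. f x y = vadd (smul lam (br e x y)) (chi \<mu> x y)"
proof -
  define F where "F p q = f (sc 1 p) (sc 1 q)" for p q
  interpret basis_bider e F
    using tw_eq biderivation_bider_basis[OF f bider] by unfold_locales (simp_all add: F_def[abs_def])
  have "finite (supp (F (L 0) (L 0)))"
    using f sc_in_SV unfolding bilinear_sv_def SV_def F_def by blast
  then obtain lam \<mu> where "finite {i. \<mu> i \<noteq> 0}"
    and F_eq: "\<And>a b. F a b = (\<lambda>t. lam * brb e a b t + chib \<mu> a b t)"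
    by (rule eq_bracket_plus_chib) auto
  moreover have "f x y = vadd (smul lam (br e x y)) (chi \<mu> x y)" if "x \<in> SV" "y \<in> SV" for x y
    using bilinear_sv_eq_bilin_ext[OF f that] F_eq
    by (simp add: bracket_plus_chi_eq_bilin_ext F_def[symmetric])
  ultimately show ?thesis using that by blast
qed

lemma bracket_plus_chi_biderivation:
  assumes tw_eq: "of_int (tw e) = 2 * e" and \<mu>: "finite {i. \<mu> i \<noteq> 0}"
    and f: "\<forall>x\<in>SV. \<forall>y\<in>SV. f x y = vadd (smul lam (br e x y)) (chi \<mu> x y)"
  shows "biderivation e f"
proof -
  define H where "H p q t = lam * brb e p q t + chib \<mu> p q t" for p q t
  have "H = (\<lambda>p q t. lam * brb e p q t + 1 * chib \<mu> p q t)"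
    by (simp add: H_def fun_eq_iff)
  then have left: "bider_left e H" and right: "bider_right e H"
    by (simp_all only: bider_left_lincomb bider_right_lincomb tw_eq
        bider_left_brb bider_right_brb bider_left_chib bider_right_chib)
  have HF: "finite (supp (H p q))" for p q
  proof -
    have "supp (H p q) \<subseteq> supp (brb e p q) \<union> supp (chib \<mu> p q)"
      by (auto simp: H_def supp_def)
    then show ?thesis using finite_supp_brb finite_supp_chib[OF \<mu>] by (auto intro: finite_subset)
  qed
  have f_eq: "f x y = bilin_ext H x y" if "x \<in> SV" "y \<in> SV" for x y
    using f that by (simp add: bracket_plus_chi_eq_bilin_ext H_def[abs_def])
  have br_SV: "br e x y \<in> SV" if "x \<in> SV" "y \<in> SV" for x y
    unfolding br_eq_bilin_ext using bilin_ext_in_SV[OF that finite_supp_brb] .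
  show ?thesis
    unfolding biderivation_def
    using bilin_ext_bider_left[OF left HF] bilin_ext_bider_right[OF right HF] f_eq br_SV
    by simp
qed

theorem theorem3p6:
  fixes e :: complex and f :: "sv \<Rightarrow> sv \<Rightarrow> sv"
  assumes "e = 0 \<or> e = 1/2"
    and "bilinear_sv f"
  shows "biderivation e f \<longleftrightarrow>
    (\<exists>(lam::complex) (\<mu>::int \<Rightarrow> complex). finite {i. \<mu> i \<noteq> 0} \<and>
       (\<forall>x\<in>SV. \<forall>y\<in>SV. f x y = vadd (smul lam (br e x y)) (chi \<mu> x y)))"
proof -
  have tw_eq: "of_int (tw e) = 2 * e"
    using assms(1) by (auto simp: tw_def mult.commute)
  show ?thesis
    using biderivation_imp_bracket_plus_chi[OF tw_eq assms(2)] bracket_plus_chi_biderivation[OF tw_eq]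
    by metis
qed

end
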